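(* Let $G$ be a directed acyclic graph on $[n]$ and $H\subseteq G$ a subgraph. Then $Q_H$ is a face of $\tilde Q_G$ if and only if $H$ is path consistent and admissible with respect to $G$.
   Context: Conventions: $G$ is a directed acyclic graph with vertex set $[n]$, every edge $(i,j)\in E(G)$ satisfying $i<j$. A subgraph $H\subseteq G$ means $V(H)=[n]$ and $E(H)\subseteq E(G)$; $H^{un}$ is the underlying undirected graph. $Q_H=\mathrm{conv}\{\mathbf e_i-\mathbf e_j:(i,j)\in E(H)\}$, $\tilde Q_G=\mathrm{conv}(\{\mathbf 0\}\cup\{\mathbf e_i-\mathbf e_j:(i,j)\in E(G)\})$ in $\mathbb R^n$. Path consistency: for an undirected path $p$ in $H^{un}$ from $u$ to $v$, let $\delta(p)$ be the number of edges traversed (from $u$ to $v$) along their orientation minus the number traversed against it. $H$ is path consistent if any two undirected paths in $H^{un}$ with the same endpoints $u,v$ have equal $\delta$; this common value is $\ell_{uv}$. Within a connected component $C$ of $H^{un}$, a weight source is a vertex $u_*\in C$ such that $\ell_{u_*v_*}=\max_{u,v\in C}\ell_{uv}$ for some $v_*\in C$. The weight function $w:[n]\to\mathbb Z$ is $w(i)=\ell_{u_*i}$ where $u_*$ is any weight source in the component of $i$ (independent of the choice). $H_{comp}$: directed multigraph whose vertices are the connected components of $H^{un}$, with one edge from the component of $u$ to the component of $v$ for each $(u,v)\in E(G)\setminus E(H)$. For such an edge $e$ corresponding to $(u,v)$, the weight decrease is $\mathsf{wd}(e)=w(u)-w(v)$. Admissibility: a path consistent $H$ is admissible with respect to $G$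 if for every directed cycle $\mathcal C$ of $H_{comp}$ (including loops, which are cycles of length 1), $\sum_{e\in\mathcal C}\mathsf{wd}(e)>-|\mathcal C|$, where $|\mathcal C|$ is the number of edges of $\mathcal C$. *)

theory Defs
  imports "HOL-Analysis.Analysis"
begin

text \<open>Vertices are the elements of a finite linearly ordered type 'n (standing for [n]);
  a directed graph is given by its edge set E :: ('n \<times> 'n) set; the vertex set is always all of 'n.
  Vectors in R^n are elements of real^'n, and e_i is axis i 1.\<close>

definition dag_on :: "('n::{finite,linorder} \<times> 'n) set \<Rightarrow> bool" where
  "dag_on G \<longleftrightarrow> (\<forall>(i,j)\<in>G. i < j)"

definition Q_poly :: "('n::{finite,linorder} \<times> 'n) set \<Rightarrow> (real^('n::{finite,linorder})) set" where
  "Q_poly H = convex hull {axis i 1 - axis j 1 | i j. (i,j) \<in> H}"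

definition Q_tilde :: "('n::{finite,linorder} \<times> 'n) set \<Rightarrow> (real^('n::{finite,linorder})) set" where
  "Q_tilde G = convex hull (insert 0 {axis i 1 - axis j 1 | i j. (i,j) \<in> G})"

definition uadj :: "('n \<times> 'n) set \<Rightarrow> 'n \<Rightarrow> 'n \<Rightarrow> bool" where
  "uadj E a b \<longleftrightarrow> (a,b) \<in> E \<or> (b,a) \<in> E"

definition upath :: "('n \<times> 'n) set \<Rightarrow> 'n list \<Rightarrow> bool" where
  "upath E ps \<longleftrightarrow> ps \<noteq> [] \<and> distinct ps \<and>
     (\<forall>i. Suc i < length ps \<longrightarrow> uadj E (ps ! i) (ps ! Suc i))"

definition delta :: "('n \<times> 'n) set \<Rightarrow> 'n list \<Rightarrow> int" where
  "delta E ps = (\<Sum>i<length ps - 1. (if (ps ! i, ps ! Suc i) \<in> E then 1 else -1))"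

definition path_consistent :: "('n \<times> 'n) set \<Rightarrow> bool" where
  "path_consistent E \<longleftrightarrow> (\<forall>ps qs. upath E ps \<and> upath E qs \<and> hd ps = hd qs \<and> last ps = last qs
      \<longrightarrow> delta E ps = delta E qs)"

definition ell :: "('n \<times> 'n) set \<Rightarrow> 'n \<Rightarrow> 'n \<Rightarrow> int" where
  "ell E u v = delta E (SOME ps. upath E ps \<and> hd ps = u \<and> last ps = v)"

definition comp :: "('n \<times> 'n) set \<Rightarrow> 'n \<Rightarrow> 'n set" where
  "comp E u = {v. \<exists>ps. upath E ps \<and> hd ps = u \<and> last ps = v}"

definition weight_source :: "('n \<times> 'n) set \<Rightarrow> 'n \<Rightarrow> bool" where
  "weight_source E u \<longleftrightarrow> (\<exists>v \<in> comp E u. \<forall>a \<in> comp E u. \<forall>b \<in> comp E u. ell E a b \<le> ell E u v)"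

definition weight :: "('n \<times> 'n) set \<Rightarrow> 'n \<Rightarrow> int" where
  "weight E i = ell E (SOME u. u \<in> comp E i \<and> weight_source E u) i"

text \<open>A directed cycle of H_comp of length k \<ge> 1 is a list of edges of G - H whose successive
  components chain up cyclically, with pairwise distinct (source) components.\<close>
definition comp_cycle :: "('n \<times> 'n) set \<Rightarrow> ('n \<times> 'n) set \<Rightarrow> ('n \<times> 'n) list \<Rightarrow> bool" where
  "comp_cycle G H cyc \<longleftrightarrow> cyc \<noteq> [] \<and> set cyc \<subseteq> G - H \<and>
     distinct (map (\<lambda>e. comp H (fst e)) cyc) \<and>
     (\<forall>i < length cyc. comp H (snd (cyc ! i)) = comp H (fst (cyc ! ((Suc i) mod length cyc))))"

definition admissible :: "('n \<times> 'n) set \<Rightarrow> ('n \<times> 'n) set \<Rightarrow> bool" where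
  "admissible G H \<longleftrightarrow> (\<forall>cyc. comp_cycle G H cyc \<longrightarrow>
     (\<Sum>e\<leftarrow>cyc. weight H (fst e) - weight H (snd e)) > - int (length cyc))"

end

theory Submission
  imports Defs
begin

text \<open>
  Both sides are equivalent to the existence of a potential \<open>c\<close> on the vertices with
  \<open>c u - c v = 1\<close> on the edges of \<open>H\<close> and \<open>c u - c v < 1\<close> on the other edges of \<open>G\<close>.
  As \<open>0\<close> lies in \<open>Q_tilde G\<close> but not in \<open>Q_poly H\<close> (all edges point upwards), a hyperplane
  exposing the face \<open>Q_poly H\<close> can be normalised to \<open>c \<bullet> x = 1\<close>; conversely such a \<open>c\<close>
  exposes \<open>Q_poly H\<close>.
  A potential forces \<open>\<delta>(p) = c u - c v\<close> for every path \<open>p\<close> from \<open>u\<close> to \<open>v\<close>, which is path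
  consistency, and \<open>w(i) = c(u\<^sub>*) - c(i)\<close>, so along a cycle of \<open>H\<^sub>c\<^sub>o\<^sub>m\<^sub>p\<close> the terms of the
  weight sources cancel and every edge \<open>(u, v)\<close> contributes \<open>c v - c u > -1\<close>: admissibility.
  Conversely, path consistency leaves only \<open>c = k - w\<close> with \<open>k\<close> constant on components, and
  admissibility says that the conditions on \<open>k\<close> form a system of difference constraints
  between components whose cycles all have positive integer slack; shortest chain distances
  for slightly lowered weights solve it.
\<close>

section \<open>Walks and components of the underlying undirected graph\<close>

lemma successively_iff_nth:
  "successively P xs \<longleftrightarrow> (\<forall>i. Suc i < length xs \<longrightarrow> P (xs ! i) (xs ! Suc i))"
  by (induction P xs rule: successively.induct) (auto simp: nth_Cons split: nat.splits)

definition uwalk :: "('n \<times> 'n) set \<Rightarrow> 'n list \<Rightarrow> bool" where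
  "uwalk E ps \<longleftrightarrow> ps \<noteq> [] \<and> successively (uadj E) ps"

lemma upath_iff_uwalk: "upath E ps \<longleftrightarrow> uwalk E ps \<and> distinct ps"
  by (auto simp: upath_def uwalk_def successively_iff_nth)

lemma uwalk_append_iff:
  "uwalk E (xs @ y # zs) \<longleftrightarrow> uwalk E (xs @ [y]) \<and> uwalk E (y # zs)"
  by (auto simp: uwalk_def successively_append_iff)

lemma uwalk_imp_ex_upath:
  "uwalk E ps \<Longrightarrow> \<exists>qs. upath E qs \<and> hd qs = hd ps \<and> last qs = last ps"
proof (induction "length ps" arbitrary: ps rule: less_induct)
  case less
  show ?case
  proof (cases "distinct ps")
    case True
    with less.prems show ?thesis by (auto simp: upath_iff_uwalk)
  next
    case False
    then obtain xs ys zs y where ps: "ps = xs @ y # ys @ y # zs"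
      using not_distinct_decomp by fastforce
    have "uwalk E (xs @ y # zs)"
      using less.prems uwalk_append_iff[of E xs y "ys @ y # zs"]
        uwalk_append_iff[of E "y # ys" y zs] uwalk_append_iff[of E xs y zs]
      unfolding ps by simp
    moreover have "hd (xs @ y # zs) = hd ps" "last (xs @ y # zs) = last ps"
      unfolding ps by (cases xs; simp) (cases zs; simp)
    ultimately show ?thesis
      using less.hyps[of "xs @ y # zs"] unfolding ps by auto
  qed
qed

definition ureach :: "('n \<times> 'n) set \<Rightarrow> ('n \<times> 'n) set" where
  "ureach E = (E \<union> E\<inverse>)\<^sup>*"

lemma uadj_imp_ureach: "uadj E u v \<Longrightarrow> (u, v) \<in> ureach E"
  by (auto simp: uadj_def ureach_def)

lemma sym_ureach: "sym (ureach E)"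
  unfolding ureach_def by (rule sym_rtrancl) (auto simp: sym_def)

lemma uwalk_imp_ureach: "uwalk E ps \<Longrightarrow> (hd ps, last ps) \<in> ureach E"
proof (induction ps)
  case (Cons a ps)
  show ?case
  proof (cases ps)
    case (Cons b qs)
    with Cons.prems have "uadj E a b" "uwalk E ps" by (auto simp: uwalk_def)
    with Cons.IH \<open>ps = b # qs\<close> show ?thesis
      unfolding ureach_def uadj_def by (auto intro: converse_rtrancl_into_rtrancl)
  qed (simp add: ureach_def)
qed (simp add: uwalk_def)

lemma ureach_imp_uwalk:
  "(u, v) \<in> ureach E \<Longrightarrow> \<exists>ps. uwalk E ps \<and> hd ps = u \<and> last ps = v"
  unfolding ureach_def
proof (induction rule: rtrancl_induct)
  case base
  show ?case by (intro exI[of _ "[u]"]) (simp add: uwalk_def)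
next
  case (step v w)
  then obtain ps where "uwalk E ps" "hd ps = u" "last ps = v" by blast
  moreover have "uadj E v w" using step.hyps(2) by (auto simp: uadj_def)
  ultimately have "uwalk E (ps @ [w])" by (simp add: uwalk_def successively_append_iff)
  with \<open>hd ps = u\<close> \<open>uwalk E ps\<close> show ?case by (auto simp: uwalk_def)
qed

lemma mem_comp_iff: "v \<in> comp E u \<longleftrightarrow> (u, v) \<in> ureach E"
proof
  assume "v \<in> comp E u"
  then obtain ps where "upath E ps" "hd ps = u" "last ps = v" unfolding comp_def by blast
  then show "(u, v) \<in> ureach E" using uwalk_imp_ureach[of E ps] by (simp add: upath_iff_uwalk)
next
  assume "(u, v) \<in> ureach E"
  then obtain ps where "uwalk E ps" "hd ps = u" "last ps = v"
    using ureach_imp_uwalk[of u v E] by blast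
  then show "v \<in> comp E u" unfolding comp_def using uwalk_imp_ex_upath[of E ps] by auto
qed

lemma comp_eq_if_ureach:
  assumes "(u, v) \<in> ureach E"
  shows "comp E u = comp E v"
proof -
  have "(v, u) \<in> ureach E" using sym_ureach assms by (rule symD)
  moreover have "trans (ureach E)" unfolding ureach_def by (rule trans_rtrancl)
  ultimately show ?thesis
    using assms unfolding set_eq_iff mem_comp_iff by (blast dest: transD)
qed

section \<open>Path differences and weights\<close>

lemma delta_Cons_Cons [simp]:
  "delta E (a # b # ps) = (if (a, b) \<in> E then 1 else -1) + delta E (b # ps)"
  unfolding delta_def by (simp add: sum.lessThan_Suc_shift del: sum.lessThan_Suc)

lemma delta_singleton [simp]: "delta E [a] = 0"
  by (simp add: delta_def)

lemma delta_append: "delta E (xs @ y # zs) = delta E (xs @ [y]) + delta E (y # zs)"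
proof (induction xs)
  case (Cons a xs)
  then show ?case by (cases xs) auto
qed simp

lemma ell_eq_delta:
  assumes "path_consistent E" and "upath E ps" "hd ps = u" "last ps = v"
  shows "ell E u v = delta E ps"
proof -
  let ?P = "\<lambda>ps. upath E ps \<and> hd ps = u \<and> last ps = v"
  have "?P (SOME ps. ?P ps)" using assms(2-) by (intro someI[of ?P ps]) blast
  with assms show ?thesis unfolding ell_def path_consistent_def by blast
qed

lemma weight_source_exists:
  fixes E :: "('n::finite \<times> 'n) set"
  shows "\<exists>u \<in> comp E i. weight_source E u"
proof -
  let ?C = "comp E i" and ?ell = "case_prod (ell E)"
  have fin: "finite (?ell ` (?C \<times> ?C))" by simp
  have "i \<in> ?C" by (simp add: mem_comp_iff ureach_def)
  then obtain a b where ab: "(a, b) \<in> ?C \<times> ?C" "ell E a b = Max (?ell ` (?C \<times> ?C))"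
    using Max_in[OF fin] by fastforce
  have "ell E x y \<le> ell E a b" if "x \<in> ?C" "y \<in> ?C" for x y
    using Max_ge[OF fin, of "ell E x y"] that unfolding ab(2) by blast
  moreover have "comp E a = ?C" using ab(1) comp_eq_if_ureach[of i a E] by (simp add: mem_comp_iff)
  ultimately have "weight_source E a" using ab(1) unfolding weight_source_def by auto
  with ab(1) show ?thesis by auto
qed

definition wsource :: "('n \<times> 'n) set \<Rightarrow> 'n \<Rightarrow> 'n" where
  "wsource E i = (SOME u. u \<in> comp E i \<and> weight_source E u)"

lemma weight_eq_ell_wsource: "weight E i = ell E (wsource E i) i"
  by (simp add: weight_def wsource_def)

lemma wsource_cong: "comp E i = comp E j \<Longrightarrow> wsource E i = wsource E j"
  by (simp add: wsource_def)

lemma in_comp_wsource: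
  fixes E :: "('n::finite \<times> 'n) set"
  shows "i \<in> comp E (wsource E i)"
proof -
  have "wsource E i \<in> comp E i"
    unfolding wsource_def using someI_ex[OF weight_source_exists[of E i, unfolded Bex_def]] by blast
  then show ?thesis using symD[OF sym_ureach] by (auto simp: mem_comp_iff)
qed

lemma weight_eq_delta:
  assumes "path_consistent E" "upath E ps" "hd ps = wsource E i" "last ps = i"
  shows "weight E i = delta E ps"
  using ell_eq_delta[OF assms] by (simp add: weight_eq_ell_wsource)

lemma weight_edge:
  fixes E :: "('n::finite \<times> 'n) set"
  assumes pc: "path_consistent E" and ab: "(a, b) \<in> E" and ba: "(b, a) \<notin> E"
  shows "weight E b = weight E a + 1"
proof -
  have "uadj E a b" using ab by (simp add: uadj_def)
  then have src: "wsource E b = wsource E a"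
    by (intro wsource_cong comp_eq_if_ureach uadj_imp_ureach) (auto simp: uadj_def)
  obtain ps where ps: "upath E ps" "hd ps = wsource E a" "last ps = a"
    using in_comp_wsource[of a E] by (auto simp: comp_def)
  have wa: "weight E a = delta E ps" using weight_eq_delta[OF pc ps] .
  txt \<open>Extend the path from the weight source to \<open>a\<close> by \<open>b\<close>, or, if it passes \<open>b\<close>, cut it
    there: path consistency identifies its remaining part from \<open>b\<close> to \<open>a\<close> with the edge.\<close>
  show ?thesis
  proof (cases "b \<in> set ps")
    case False
    obtain xs where xs: "ps = xs @ [a]"
      using ps by (metis append_butlast_last_id upath_def)
    have "upath E (xs @ [a, b])"
      using ps(1) False \<open>uadj E a b\<close> unfolding xs
      by (auto simp: upath_iff_uwalk uwalk_def successively_append_iff)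
    moreover have "hd (xs @ [a, b]) = wsource E b" using ps(2) src unfolding xs by (cases xs) auto
    ultimately have "weight E b = delta E (xs @ [a, b])" using weight_eq_delta[OF pc] by simp
    also have "\<dots> = delta E ps + 1" using delta_append[of E xs a "[b]"] ab unfolding xs by simp
    finally show ?thesis using wa by simp
  next
    case True
    then obtain xs ys where xs: "ps = xs @ b # ys" by (meson split_list)
    have walks: "upath E (xs @ [b])" "upath E (b # ys)"
      using ps(1) uwalk_append_iff[of E xs b ys] unfolding xs by (auto simp: upath_iff_uwalk)
    have "hd (xs @ [b]) = wsource E b" using ps(2) src unfolding xs by (cases xs) auto
    then have wb: "weight E b = delta E (xs @ [b])" using weight_eq_delta[OF pc walks(1)] by simp
    have "b \<noteq> a" using ab ba by auto
    then have "upath E [b, a]" using \<open>uadj E a b\<close> by (auto simp: upath_iff_uwalk uwalk_def uadj_def)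
    moreover have "last (b # ys) = a" using ps(3) unfolding xs by (cases ys) auto
    ultimately have "delta E (b # ys) = delta E [b, a]"
      using pc walks(2) unfolding path_consistent_def by fastforce
    also have "\<dots> = -1" using ba by (simp add: delta_def)
    finally show ?thesis using wa wb delta_append[of E xs b ys] unfolding xs by simp
  qed
qed

section \<open>Exposing potentials\<close>

text \<open>\<open>\<chi> i. c i\<close> is the normal of the hyperplane \<open>(\<chi> i. c i) \<bullet> x = 1\<close> that cuts \<open>Q_poly H\<close>
  out of \<open>Q_tilde G\<close>.\<close>
definition exposing_potential :: "('n \<times> 'n) set \<Rightarrow> ('n \<times> 'n) set \<Rightarrow> ('n \<Rightarrow> real) \<Rightarrow> bool" where
  "exposing_potential G H c \<longleftrightarrow>
     (\<forall>(a, b) \<in> H. c a - c b = 1) \<and> (\<forall>(a, b) \<in> G - H. c a - c b < 1)"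

lemma delta_eq_potential_diff:
  assumes "\<forall>(a, b) \<in> E. c a - c b = (1::real)" and "uwalk E ps"
  shows "real_of_int (delta E ps) = c (hd ps) - c (last ps)"
  using assms(2)
proof (induction ps)
  case (Cons a ps)
  show ?case
  proof (cases ps)
    case (Cons b qs)
    with Cons.prems have "uadj E a b" "uwalk E ps" by (auto simp: uwalk_def)
    with assms(1) Cons.IH \<open>ps = b # qs\<close> show ?thesis by (auto simp: uadj_def)
  qed simp
qed (simp add: uwalk_def)

lemma exposing_potential_imp_path_consistent:
  assumes "exposing_potential G H c"
  shows "path_consistent H"
  unfolding path_consistent_def
proof (intro allI impI)
  fix ps qs
  assume paths: "upath H ps \<and> upath H qs \<and> hd ps = hd qs \<and> last ps = last qs"
  have pot: "\<forall>(a, b) \<in> H. c a - c b = 1" using assms by (simp add: exposing_potential_def)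
  have "real_of_int (delta H ps) = real_of_int (delta H qs)"
    using paths delta_eq_potential_diff[OF pot, of ps] delta_eq_potential_diff[OF pot, of qs]
    by (simp add: upath_iff_uwalk)
  then show "delta H ps = delta H qs" by simp
qed

lemma weight_eq_potential_diff:
  fixes H :: "('n::finite \<times> 'n) set"
  assumes pot: "\<forall>(a, b) \<in> H. c a - c b = (1::real)" and "path_consistent H"
  shows "real_of_int (weight H i) = c (wsource H i) - c i"
proof -
  obtain ps where ps: "upath H ps" "hd ps = wsource H i" "last ps = i"
    using in_comp_wsource[of i H] by (auto simp: comp_def)
  with assms show ?thesis
    using delta_eq_potential_diff[OF pot, of ps] by (simp add: weight_eq_delta upath_iff_uwalk)
qed

lemma sum_rotate_index: "(\<Sum>i<m. g (Suc i mod m)) = (\<Sum>i<m. g i :: 'a::comm_monoid_add)"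
proof (cases m)
  case (Suc n)
  have "(\<Sum>i<Suc n. g (Suc i mod Suc n)) = (\<Sum>i<n. g (Suc i)) + g 0"
    by (simp add: mod_Suc)
  also have "\<dots> = (\<Sum>i<Suc n. g i)"
    by (simp add: sum.lessThan_Suc_shift add.commute del: sum.lessThan_Suc)
  finally show ?thesis using Suc by simp
qed simp

lemma exposing_potential_imp_admissible:
  fixes G H :: "('n::finite \<times> 'n) set"
  assumes c: "exposing_potential G H c"
  shows "admissible G H"
  unfolding admissible_def
proof (intro allI impI)
  fix cyc assume cyc: "comp_cycle G H cyc"
  let ?m = "length cyc" and ?src = "\<lambda>i. c (wsource H (fst (cyc ! i)))"
  have pot: "\<forall>(a, b) \<in> H. c a - c b = 1" using c by (simp add: exposing_potential_def)
  have pc: "path_consistent H" using c by (rule exposing_potential_imp_path_consistent)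
  have next_src: "wsource H (snd (cyc ! i)) = wsource H (fst (cyc ! (Suc i mod ?m)))" if "i < ?m" for i
    using cyc that unfolding comp_cycle_def by (blast intro: wsource_cong)
  have "real_of_int (\<Sum>e\<leftarrow>cyc. weight H (fst e) - weight H (snd e))
      = (\<Sum>i<?m. (?src i - ?src (Suc i mod ?m)) + (c (snd (cyc ! i)) - c (fst (cyc ! i))))"
    by (auto simp: sum_list_sum_nth atLeast0LessThan weight_eq_potential_diff[OF pot pc] next_src
        intro: sum.cong)
  also have "\<dots> = (\<Sum>i<?m. c (snd (cyc ! i)) - c (fst (cyc ! i)))"
    by (simp add: sum.distrib sum_subtractf sum_rotate_index[of ?src])
  also have "\<dots> > (\<Sum>i<?m. -1)"
  proof (rule sum_strict_mono)
    fix i assume "i \<in> {..<?m}"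
    then have "cyc ! i \<in> set cyc" by simp
    then have "cyc ! i \<in> G - H" using cyc by (auto simp: comp_cycle_def)
    moreover have "\<forall>(a, b) \<in> G - H. c a - c b < 1" using c by (simp add: exposing_potential_def)
    ultimately have "c (fst (cyc ! i)) - c (snd (cyc ! i)) < 1" by (auto simp: case_prod_beta)
    then show "-1 < c (snd (cyc ! i)) - c (fst (cyc ! i))" by simp
  qed (use cyc in \<open>auto simp: comp_cycle_def\<close>)
  finally show "(\<Sum>e\<leftarrow>cyc. weight H (fst e) - weight H (snd e)) > - int ?m" by simp
qed

section \<open>Difference constraints\<close>

text \<open>For \<open>s\<close>, \<open>t\<close> the components of the endpoints of an edge of
  \<open>G - H\<close>, \<open>chain_cycle\<close> is literally \<open>comp_cycle G H\<close>.\<close>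
fun chain_from :: "('e \<Rightarrow> 'c) \<Rightarrow> ('e \<Rightarrow> 'c) \<Rightarrow> 'e set \<Rightarrow> 'c \<Rightarrow> 'e list \<Rightarrow> bool" where
  "chain_from s t A X [] \<longleftrightarrow> True"
| "chain_from s t A X (e # P) \<longleftrightarrow> e \<in> A \<and> s e = X \<and> X \<notin> s ` set P \<and> chain_from s t A (t e) P"

definition chain_cycle :: "('e \<Rightarrow> 'c) \<Rightarrow> ('e \<Rightarrow> 'c) \<Rightarrow> 'e set \<Rightarrow> 'e list \<Rightarrow> bool" where
  "chain_cycle s t A Q \<longleftrightarrow> Q \<noteq> [] \<and> set Q \<subseteq> A \<and> distinct (map s Q) \<and>
     (\<forall>i < length Q. t (Q ! i) = s (Q ! (Suc i mod length Q)))"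

lemma chain_from_distinct: "chain_from s t A X P \<Longrightarrow> set P \<subseteq> A \<and> distinct (map s P)"
  by (induction P arbitrary: X) auto

lemma length_le_card_if_distinct_map:
  assumes "distinct (map f P)" "set P \<subseteq> A" "finite A"
  shows "length P \<le> card A"
  using assms by (metis card_mono distinct_card distinct_map)

lemma chain_from_length: "chain_from s t A X P \<Longrightarrow> finite A \<Longrightarrow> length P \<le> card A"
  using chain_from_distinct length_le_card_if_distinct_map by metis

lemma finite_chains_from:
  assumes "finite A"
  shows "finite {P. chain_from s t A X P}"
proof (rule finite_subset)
  show "{P. chain_from s t A X P} \<subseteq> {P. set P \<subseteq> A \<and> length P \<le> card A}"
    using chain_from_distinct[of s t A X] chain_from_length[OF _ assms, of s t X] by auto
qed (rule finite_lists_length_le[OF assms])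

lemma chain_from_append:
  "chain_from s t A X (P @ R) \<Longrightarrow> chain_from s t A X P \<and> chain_from s t A (last (X # map t P)) R"
  by (induction P arbitrary: X) auto

lemma chain_from_sources: "chain_from s t A X P \<Longrightarrow> map s P = butlast (X # map t P)"
  by (induction P arbitrary: X) auto

lemma chain_from_closed_is_cycle:
  assumes chain: "chain_from s t A X Q" and "Q \<noteq> []" and closed: "last (X # map t Q) = X"
  shows "chain_cycle s t A Q"
proof -
  have "X # map t Q = map s Q @ [X]"
    using chain_from_sources[OF chain] closed by (metis append_butlast_last_id list.distinct(1))
  with \<open>Q \<noteq> []\<close> have "map t Q = rotate1 (map s Q)" by (cases Q) auto
  then have "t (Q ! i) = s (Q ! (Suc i mod length Q))" if "i < length Q" for i
  proof -
    have "Suc i mod length Q < length Q" using \<open>Q \<noteq> []\<close> by simp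
    with that \<open>map t Q = rotate1 (map s Q)\<close> show ?thesis
      by (metis length_map nth_map nth_rotate1)
  qed
  with chain_from_distinct[OF chain] \<open>Q \<noteq> []\<close> show ?thesis by (simp add: chain_cycle_def)
qed

definition chain_dist :: "('e \<Rightarrow> 'c) \<Rightarrow> ('e \<Rightarrow> 'c) \<Rightarrow> 'e set \<Rightarrow> ('e \<Rightarrow> 'a::linordered_ab_group_add) \<Rightarrow> 'c \<Rightarrow> 'a" where
  "chain_dist s t A w X = Min ((\<lambda>P. sum_list (map w P)) ` {P. chain_from s t A X P})"

lemma chain_dist_le:
  assumes "finite A" and "chain_from s t A X P"
  shows "chain_dist s t A w X \<le> sum_list (map w P)"
  unfolding chain_dist_def using finite_chains_from[OF assms(1), of s t X] assms(2)
  by (intro Min_le) auto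

lemma chain_dist_attained:
  assumes "finite A"
  obtains P where "chain_from s t A X P" "chain_dist s t A w X = sum_list (map w P)"
proof -
  have "chain_dist s t A w X \<in> (\<lambda>P. sum_list (map w P)) ` {P. chain_from s t A X P}"
    unfolding chain_dist_def using finite_chains_from[OF assms, of s t X]
    by (intro Min_in) (auto intro: exI[of _ "[]"])
  with that show ?thesis by blast
qed

lemma chain_dist_triangle:
  assumes fin: "finite A" and cycles: "\<And>Q. chain_cycle s t A Q \<Longrightarrow> 0 \<le> sum_list (map w Q)"
    and e: "e \<in> A"
  shows "chain_dist s t A w (s e) \<le> w e + chain_dist s t A w (t e)"
proof -
  obtain P where P: "chain_from s t A (t e) P" "chain_dist s t A w (t e) = sum_list (map w P)"
    using chain_dist_attained[OF fin] .
  show ?thesis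
  proof (cases "s e \<in> s ` set P")
    case False
    with P(1) e have "chain_from s t A (s e) (e # P)" by simp
    then show ?thesis using chain_dist_le[OF fin] P(2) by (metis sum_list.Cons list.map(2))
  next
    case True
    then obtain f where "f \<in> set P" "s f = s e" by auto
    then obtain P1 P2 where P12: "P = P1 @ f # P2" by (meson split_list)
    with P(1) have P1: "chain_from s t A (t e) P1"
      and P2: "chain_from s t A (last (t e # map t P1)) (f # P2)"
      using chain_from_append[of s t A "t e" P1 "f # P2"] by auto
    have closed: "last (t e # map t P1) = s e" using P2 \<open>s f = s e\<close> by simp
    have "s e \<notin> s ` set P1"
      using chain_from_distinct[OF P(1)] \<open>s f = s e\<close> unfolding P12 by auto
    with P1 e have "chain_from s t A (s e) (e # P1)" by simp
    then have "chain_cycle s t A (e # P1)"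
      using closed by (intro chain_from_closed_is_cycle) auto
    then have "0 \<le> w e + sum_list (map w P1)" using cycles by fastforce
    moreover have "chain_dist s t A w (s e) \<le> sum_list (map w (f # P2))"
      using chain_dist_le[OF fin P2[unfolded closed]] .
    ultimately have "chain_dist s t A w (s e) \<le> (w e + sum_list (map w P1)) + sum_list (map w (f # P2))"
      by (simp add: add_increasing)
    with P(2) show ?thesis unfolding P12 by (simp add: add.assoc)
  qed
qed

lemma strict_potential_exists:
  fixes \<beta> :: "'e \<Rightarrow> int"
  assumes fin: "finite A" and cycles: "\<And>Q. chain_cycle s t A Q \<Longrightarrow> 0 < sum_list (map \<beta> Q)"
  shows "\<exists>k :: 'c \<Rightarrow> real. \<forall>e \<in> A. k (s e) - k (t e) < \<beta> e"
proof -
  txt \<open>Lowering all weights by \<open>\<epsilon>\<close> keeps cycle weights nonnegative, since a cycle has at most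
    \<open>card A\<close> edges and integer weight at least 1, and makes the triangle inequality strict.\<close>
  define \<epsilon> :: real where "\<epsilon> = 1 / (card A + 1)"
  define w where "w e = \<beta> e - \<epsilon>" for e
  have "\<epsilon> > 0" by (simp add: \<epsilon>_def)
  have nonneg: "0 \<le> sum_list (map w Q)" if Q: "chain_cycle s t A Q" for Q
  proof -
    have "length Q \<le> card A"
      using Q fin by (auto simp: chain_cycle_def intro: length_le_card_if_distinct_map)
    then have "length Q * \<epsilon> < 1" by (simp add: \<epsilon>_def field_simps)
    moreover have "1 \<le> sum_list (map \<beta> Q)" using cycles[OF Q] by simp
    moreover have "sum_list (map w Q) = sum_list (map \<beta> Q) - length Q * \<epsilon>"
      by (induction Q) (simp_all add: w_def algebra_simps)
    ultimately show ?thesis by linarith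
  qed
  have "chain_dist s t A w (s e) - chain_dist s t A w (t e) < \<beta> e" if "e \<in> A" for e
    using chain_dist_triangle[where s = s and t = t and w = w, OF fin nonneg that] \<open>\<epsilon> > 0\<close>
    by (simp add: w_def)
  then show ?thesis by blast
qed

section \<open>From admissibility to a potential\<close>

lemma dag_on_mono: "dag_on G \<Longrightarrow> H \<subseteq> G \<Longrightarrow> dag_on H"
  by (auto simp: dag_on_def)

lemma dag_on_asym:
  assumes "dag_on H" "(a, b) \<in> H"
  shows "(b, a) \<notin> H"
proof
  assume "(b, a) \<in> H"
  with assms have "a < b" "b < a" by (auto simp: dag_on_def)
  then show False by simp
qed

lemma exposing_potential_exists:
  fixes G H :: "('n::{finite,linorder} \<times> 'n) set"
  assumes dag: "dag_on G" and sub: "H \<subseteq> G" and pc: "path_consistent H" and adm: "admissible G H"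
  shows "\<exists>c. exposing_potential G H c"
proof -
  let ?s = "\<lambda>e. comp H (fst e)" and ?t = "\<lambda>e. comp H (snd e)"
  let ?\<beta> = "\<lambda>e. 1 + weight H (fst e) - weight H (snd e)"
  have "0 < sum_list (map ?\<beta> Q)" if "chain_cycle ?s ?t (G - H) Q" for Q
  proof -
    have "comp_cycle G H Q" using that by (simp add: chain_cycle_def comp_cycle_def)
    then have "- int (length Q) < (\<Sum>e\<leftarrow>Q. weight H (fst e) - weight H (snd e))"
      using adm by (simp add: admissible_def)
    moreover have "sum_list (map ?\<beta> Q) = int (length Q) + (\<Sum>e\<leftarrow>Q. weight H (fst e) - weight H (snd e))"
      by (induction Q) simp_all
    ultimately show ?thesis by linarith
  qed
  then obtain k :: "'n set \<Rightarrow> real" where k: "\<forall>e \<in> G - H. k (?s e) - k (?t e) < ?\<beta> e"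
    using strict_potential_exists[of "G - H" ?s ?t ?\<beta>] by auto
  define c where "c i = k (comp H i) - weight H i" for i
  have "c a - c b = 1" if ab: "(a, b) \<in> H" for a b
  proof -
    have "(b, a) \<notin> H" using dag_on_asym[OF dag_on_mono[OF dag sub] ab] .
    with ab pc have "weight H b = weight H a + 1" by (simp add: weight_edge)
    moreover have "comp H a = comp H b" using ab by (simp add: comp_eq_if_ureach uadj_imp_ureach uadj_def)
    ultimately show ?thesis by (simp add: c_def)
  qed
  moreover have "c a - c b < 1" if "(a, b) \<in> G - H" for a b
    using bspec[OF k that] by (simp add: c_def)
  ultimately show ?thesis unfolding exposing_potential_def by blast
qed

section \<open>Faces of the polytope\<close>

lemma convex_hull_Int_supporting_hyperplane:
  fixes S :: "'a::euclidean_space set"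
  assumes "finite S" and "S \<subseteq> {x. a \<bullet> x \<le> b}"
  shows "convex hull S \<inter> {x. a \<bullet> x = b} = convex hull (S \<inter> {x. a \<bullet> x = b})"
proof
  have "convex hull S \<subseteq> {x. a \<bullet> x \<le> b}"
    using assms(2) by (rule hull_minimal) (rule convex_halfspace_le)
  then have "(convex hull S \<inter> {x. a \<bullet> x = b}) face_of convex hull S"
    by (intro face_of_Int_supporting_hyperplane_le) auto
  then obtain T where T: "T \<subseteq> S" "convex hull S \<inter> {x. a \<bullet> x = b} = convex hull T"
    using face_of_convex_hull_subset[OF finite_imp_compact[OF assms(1)]] by blast
  moreover have "T \<subseteq> {x. a \<bullet> x = b}" using hull_subset[of T convex] T(2) by blast
  ultimately show "convex hull S \<inter> {x. a \<bullet> x = b} \<subseteq> convex hull (S \<inter> {x. a \<bullet> x = b})"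
    by (simp add: hull_mono)
next
  have "convex hull (S \<inter> {x. a \<bullet> x = b}) \<subseteq> {x. a \<bullet> x = b}"
    by (rule hull_minimal) (auto simp: convex_hyperplane)
  then show "convex hull (S \<inter> {x. a \<bullet> x = b}) \<subseteq> convex hull S \<inter> {x. a \<bullet> x = b}"
    by (simp add: hull_mono)
qed

lemma inner_axis_diff: "(a :: real^'n) \<bullet> (axis i 1 - axis j 1) = a $ i - a $ j"
  by (simp add: inner_diff_right inner_axis)

lemma zero_notin_Q_poly:
  fixes H :: "('n::{finite,linorder} \<times> 'n) set"
  assumes "dag_on H"
  shows "0 \<notin> Q_poly H"
proof -
  define rank :: "(real, 'n) vec" where "rank = (\<chi> k. real (card {x. x < k}))"
  have "rank \<bullet> (axis i 1 - axis j 1) < 0" if "(i, j) \<in> H" for i j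
  proof -
    have "{x. x < i} \<subset> {x. x < j}" using that assms by (auto simp: dag_on_def)
    then have "card {x. x < i} < card {x. x < j}" by (simp add: psubset_card_mono)
    then show ?thesis by (simp add: inner_axis_diff rank_def)
  qed
  then have "Q_poly H \<subseteq> {x. rank \<bullet> x < 0}"
    unfolding Q_poly_def by (intro hull_minimal) (auto simp: convex_halfspace_lt)
  then show ?thesis by auto
qed

lemma axis_diff_notin_Q_poly:
  fixes H :: "('n::{finite,linorder} \<times> 'n) set"
  assumes "dag_on H" and "(u, v) \<notin> H" and "u \<noteq> v"
  shows "axis u 1 - axis v 1 \<notin> Q_poly H"
proof -
  define g :: "(real, 'n) vec" where "g = axis u 1 - axis v 1"
  have "g \<bullet> (axis i 1 - axis j 1) \<le> 1" if "(i, j) \<in> H" for i j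
  proof -
    have "i \<noteq> j" "(i, j) \<noteq> (u, v)" using that assms by (auto simp: dag_on_def)
    then show ?thesis using \<open>u \<noteq> v\<close> unfolding inner_axis_diff by (auto simp: g_def axis_def)
  qed
  then have "Q_poly H \<subseteq> {x. g \<bullet> x \<le> 1}"
    unfolding Q_poly_def by (intro hull_minimal) (auto simp: convex_halfspace_le)
  moreover have "g \<bullet> g = 2"
    using inner_axis_diff[of g u v] \<open>u \<noteq> v\<close> by (simp add: g_def axis_def)
  ultimately show ?thesis unfolding g_def by force
qed

lemma finite_edge_vectors:
  fixes G :: "('n::finite \<times> 'n) set"
  shows "finite {axis i (1::real) - axis j 1 | i j. (i, j) \<in> G}"
proof -
  have "{axis i (1::real) - axis j 1 | i j. (i, j) \<in> G} = (\<lambda>(i, j). axis i 1 - axis j 1) ` G"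
    by auto
  then show ?thesis by simp
qed

lemma Q_tilde_exposing_hyperplane:
  fixes G H :: "('n::{finite,linorder} \<times> 'n) set"
  assumes c: "exposing_potential G H c" and "H \<subseteq> G"
  shows "Q_tilde G \<subseteq> {x. (\<chi> i. c i) \<bullet> x \<le> 1}"
    and "Q_tilde G \<inter> {x. (\<chi> i. c i) \<bullet> x = 1} = Q_poly H"
proof -
  let ?a = "\<chi> i. c i" and ?W = "insert 0 {axis i 1 - axis j 1 | i j. (i, j) \<in> G}"
  have edge: "?a \<bullet> (axis i 1 - axis j 1) = c i - c j" for i j by (simp add: inner_axis_diff)
  have H_edge: "c i - c j = 1" if "(i, j) \<in> H" for i j
    using c that by (auto simp: exposing_potential_def)
  have G_edge: "c i - c j < 1" if "(i, j) \<in> G - H" for i j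
    using c that by (auto simp: exposing_potential_def)
  have W_le: "?W \<subseteq> {x. ?a \<bullet> x \<le> 1}"
    using H_edge G_edge by (force simp: edge)
  then show "Q_tilde G \<subseteq> {x. ?a \<bullet> x \<le> 1}"
    unfolding Q_tilde_def by (rule hull_minimal) (rule convex_halfspace_le)
  have "?W \<inter> {x. ?a \<bullet> x = 1} = {axis i 1 - axis j 1 | i j. (i, j) \<in> H}"
    using H_edge G_edge \<open>H \<subseteq> G\<close> by (force simp: edge)
  then show "Q_tilde G \<inter> {x. ?a \<bullet> x = 1} = Q_poly H"
    using convex_hull_Int_supporting_hyperplane[OF _ W_le] finite_edge_vectors[of G]
    by (simp add: Q_tilde_def Q_poly_def)
qed

lemma exposing_potential_imp_face:
  fixes G H :: "('n::{finite,linorder} \<times> 'n) set"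
  assumes "exposing_potential G H c" and "H \<subseteq> G"
  shows "Q_poly H face_of Q_tilde G"
proof -
  have "(Q_tilde G \<inter> {x. (\<chi> i. c i) \<bullet> x = 1}) face_of Q_tilde G"
    using Q_tilde_exposing_hyperplane(1)[OF assms]
    by (intro face_of_Int_supporting_hyperplane_le) (auto simp: Q_tilde_def)
  then show ?thesis using Q_tilde_exposing_hyperplane(2)[OF assms] by simp
qed

lemma face_imp_exposing_potential:
  fixes G H :: "('n::{finite,linorder} \<times> 'n) set"
  assumes dag: "dag_on G" and sub: "H \<subseteq> G" and face: "Q_poly H face_of Q_tilde G"
  shows "\<exists>c. exposing_potential G H c"
proof -
  have "polyhedron (Q_tilde G)"
    unfolding Q_tilde_def using finite_edge_vectors[of G]
    by (intro polytope_imp_polyhedron polytope_convex_hull) simp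
  with face have "Q_poly H exposed_face_of Q_tilde G" by (simp add: exposed_face_of_polyhedron)
  then obtain a b where ab: "Q_tilde G \<subseteq> {x. a \<bullet> x \<le> b}" "Q_poly H = Q_tilde G \<inter> {x. a \<bullet> x = b}"
    unfolding exposed_face_of_def by blast
  have edge_in: "axis i 1 - axis j 1 \<in> Q_tilde G" if "(i, j) \<in> G" for i j
    unfolding Q_tilde_def using that by (intro hull_inc) blast
  have "0 \<in> Q_tilde G" unfolding Q_tilde_def by (simp add: hull_inc)
  moreover have "0 \<notin> Q_poly H" using zero_notin_Q_poly[OF dag_on_mono[OF dag sub]] .
  ultimately have "b > 0" using ab by force
  define c where "c i = a $ i / b" for i
  have "c i - c j = 1" if "(i, j) \<in> H" for i j
  proof -
    have "axis i 1 - axis j 1 \<in> Q_poly H" unfolding Q_poly_def using that by (intro hull_inc) blast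
    then have "a $ i - a $ j = b" using ab(2) by (simp add: inner_axis_diff)
    with \<open>b > 0\<close> show ?thesis by (simp add: c_def diff_divide_distrib[symmetric])
  qed
  moreover have "c i - c j < 1" if "(i, j) \<in> G - H" for i j
  proof -
    have "i \<noteq> j" using that dag by (auto simp: dag_on_def)
    then have "axis i 1 - axis j 1 \<notin> Q_poly H"
      using that axis_diff_notin_Q_poly[OF dag_on_mono[OF dag sub]] by blast
    then have "a $ i - a $ j < b"
      using that edge_in[of i j] ab by (force simp: inner_axis_diff)
    with \<open>b > 0\<close> show ?thesis by (simp add: c_def diff_divide_distrib[symmetric])
  qed
  ultimately show ?thesis unfolding exposing_potential_def by blast
qed

theorem mainTheorem9:
  fixes G H :: "('n::{finite,linorder} \<times> 'n) set"
  assumes "dag_on G" and "H \<subseteq> G"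
  shows "Q_poly H face_of Q_tilde G \<longleftrightarrow> path_consistent H \<and> admissible G H"
proof
  assume "Q_poly H face_of Q_tilde G"
  then obtain c where c: "exposing_potential G H c"
    using face_imp_exposing_potential[OF assms] by blast
  show "path_consistent H \<and> admissible G H"
    using exposing_potential_imp_path_consistent[OF c] exposing_potential_imp_admissible[OF c] ..
next
  assume "path_consistent H \<and> admissible G H"
  then obtain c where c: "exposing_potential G H c"
    using exposing_potential_exists[OF assms] by blast
  show "Q_poly H face_of Q_tilde G"
    using exposing_potential_imp_face[OF c assms(2)] .
qed

end
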